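(* For every $\varphi\in\mathcal{L}_{CoRGAL}$ and every maximal consistent theory $x$: $\varphi\in x$ if and only if $(M^C,x)\models\varphi$.
   Context: Fix a finite set $A$ of agents and a countable set $P$ of propositional variables. The language $\mathcal{L}_{CoRGAL}$ is given by $\varphi ::= p \mid \neg\varphi \mid (\varphi\wedge\varphi) \mid K_a\varphi \mid [\varphi]\varphi \mid [G,\varphi]\varphi \mid [\langle G\rangle]\varphi$ with $p\in P$, $a\in A$, $G\subseteq A$. $\mathcal{L}_{EL}$ is the fragment built only from $p,\neg,\wedge,K_a$. Duals: $\langle\psi\rangle\varphi:=\neg[\psi]\neg\varphi$, $\langle G,\psi\rangle\varphi:=\neg[G,\psi]\neg\varphi$. $\mathcal{L}^G_{EL}$ is the set of formulas $\bigwedge_{i\in G}K_i\varphi_i$ with $\varphi_i\in\mathcal{L}_{EL}$; $\psi_G,\chi_G$ range over it. Semantics over epistemic models $M=(W,\sim,V)$ ($W\ne\emptyset$, $\sim_a$ equivalence relations, $V:P\to\mathcal{P}(W)$; $M^\varphi$ the restriction to $\{v:(M,v)\models\varphi\}$): standard for $p,\neg,\wedge,K_a$; $[\varphi]\psi$ holds at $w$ iff $(M,w)\models\varphi$ implies $(M^\varphi,w)\models\psi$; $[G,\chi]\varphi$ holds iff $\chi$ holds and $[\psi_G\wedge\chi]\varphi$ holds for all $\psi_G$; $[\langle G\rangle]\varphi$ holds iff for every $\psi_G$ there is $\chi_{A\setminus G}$ with $\psi_G\to\langle\psi_G\wedge\chi_{A\setminus G}\rangle\varphi$ holding. Necessity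 forms: $\eta ::= \sharp \mid \varphi\to\eta(\sharp)\mid K_a\eta(\sharp)\mid[\varphi]\eta(\sharp)$, $\eta(\varphi)$ replaces the unique $\sharp$ by $\varphi$. $\mathbf{CoRGAL}$ is the smallest set containing all instances of (A0) propositional tautologies; (A1) $K_a(\varphi\to\psi)\to(K_a\varphi\to K_a\psi)$; (A2) $K_a\varphi\to\varphi$; (A3) $K_a\varphi\to K_aK_a\varphi$; (A4) $\neg K_a\varphi\to K_a\neg K_a\varphi$; (A5) $[\varphi]p\leftrightarrow(\varphi\to p)$; (A6) $[\varphi]\neg\psi\leftrightarrow(\varphi\to\neg[\varphi]\psi)$; (A7) $[\varphi](\psi\wedge\chi)\leftrightarrow([\varphi]\psi\wedge[\varphi]\chi)$; (A8) $[\varphi]K_a\psi\leftrightarrow(\varphi\to K_a[\varphi]\psi)$; (A9) $[\varphi][\psi]\chi\leftrightarrow[\varphi\wedge[\varphi]\psi]\chi$; (A10) $[G,\chi]\varphi\to\chi\wedge[\psi_G\wedge\chi]\varphi$; (A11) $[\langle G\rangle]\varphi\to\langle A\setminus G,\psi_G\rangle\varphi$; closed under (R0) modus ponens; (R1) $\varphi/K_a\varphi$; (R2) $\varphi/[\psi]\varphi$; (R3) $\varphi/[G,\chi]\varphi$; (R4) $\varphi/[\langle G\rangle]\varphi$; (R5) from $\eta(\chi\wedge[\psi_G\wedge\chi]\varphi)$ for all $\psi_G$ infer $\eta([G,\chi]\varphi)$; (R6) from $\eta(\langle A\setminus G,\psi_G\rangle\varphi)$ for all $\psi_G$ infer $\eta([\langle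 G\rangle]\varphi)$. A theory is a set of formulas containing $\mathbf{CoRGAL}$ and closed under (R0), (R5), (R6); it is consistent iff $\bot\notin x$ and maximal iff for each $\varphi$, $\varphi\in x$ or $\neg\varphi\in x$. The canonical model $M^C=(W^C,\sim^C,V^C)$ has $W^C$ the set of maximal consistent theories, $x\sim^C_a y$ iff $\{\varphi:K_a\varphi\in x\}=\{\varphi:K_a\varphi\in y\}$, and $x\in V^C(p)$ iff $p\in x$. *)

theory Defs
  imports Main "HOL-Library.Countable"
begin

text \<open>Agents: a finite type 'a (A = UNIV); propositional variables: a countable type 'p.\<close>

datatype ('a, 'p) fm =
    Atom 'p
  | Neg "('a, 'p) fm"
  | Conj "('a, 'p) fm" "('a, 'p) fm"
  | K 'a "('a, 'p) fm"
  | Ann "('a, 'p) fm" "('a, 'p) fm"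
  | GAnn "'a set" "('a, 'p) fm" "('a, 'p) fm"
  | Coal "'a set" "('a, 'p) fm"

definition fimp :: "('a,'p) fm \<Rightarrow> ('a,'p) fm \<Rightarrow> ('a,'p) fm" where
  "fimp \<phi> \<psi> = Neg (Conj \<phi> (Neg \<psi>))"

definition fiff :: "('a,'p) fm \<Rightarrow> ('a,'p) fm \<Rightarrow> ('a,'p) fm" where
  "fiff \<phi> \<psi> = Conj (fimp \<phi> \<psi>) (fimp \<psi> \<phi>)"

definition fbot :: "('a,'p) fm" where
  "fbot = Conj (Atom undefined) (Neg (Atom undefined))"

definition ftop :: "('a,'p) fm" where
  "ftop = Neg fbot"

definition dAnn :: "('a,'p) fm \<Rightarrow> ('a,'p) fm \<Rightarrow> ('a,'p) fm" where
  "dAnn \<psi> \<phi> = Neg (Ann \<psi> (Neg \<phi>))"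

definition dGAnn :: "'a set \<Rightarrow> ('a,'p) fm \<Rightarrow> ('a,'p) fm \<Rightarrow> ('a,'p) fm" where
  "dGAnn G \<psi> \<phi> = Neg (GAnn G \<psi> (Neg \<phi>))"

primrec is_el :: "('a,'p) fm \<Rightarrow> bool" where
  "is_el (Atom p) = True"
| "is_el (Neg \<phi>) = is_el \<phi>"
| "is_el (Conj \<phi> \<psi>) = (is_el \<phi> \<and> is_el \<psi>)"
| "is_el (K a \<phi>) = is_el \<phi>"
| "is_el (Ann \<phi> \<psi>) = False"
| "is_el (GAnn G \<phi> \<psi>) = False"
| "is_el (Coal G \<phi>) = False"

fun conjs :: "('a,'p) fm list \<Rightarrow> ('a,'p) fm" where
  "conjs [] = ftop"
| "conjs [\<phi>] = \<phi>"
| "conjs (\<phi> # \<psi>s) = Conj \<phi> (conjs \<psi>s)"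

text \<open>L^G_EL: formulas \<And>_{i\<in>G} K_i \<phi>_i with \<phi>_i epistemic (any enumeration order of G;
  the empty conjunction is \<top>).\<close>
definition LG :: "'a set \<Rightarrow> ('a,'p) fm set" where
  "LG G = {conjs (map (\<lambda>i. K i (f i)) xs) | xs f. distinct xs \<and> set xs = G \<and> (\<forall>i. is_el (f i))}"

record ('a, 'p, 'w) model =
  W :: "'w set"
  Rel :: "'a \<Rightarrow> ('w \<times> 'w) set"
  Val :: "'p \<Rightarrow> 'w set"

definition epistemic_model :: "('a,'p,'w) model \<Rightarrow> bool" where
  "epistemic_model M \<longleftrightarrow> W M \<noteq> {} \<and> (\<forall>a. equiv (W M) (Rel M a)) \<and> (\<forall>p. Val M p \<subseteq> W M)"

definition restr :: "('a,'p,'w) model \<Rightarrow> 'w set \<Rightarrow> ('a,'p,'w) model" where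
  "restr M S = \<lparr>W = W M \<inter> S, Rel = (\<lambda>a. Rel M a \<inter> (S \<times> S)), Val = (\<lambda>p. Val M p \<inter> S)\<rparr>"

primrec sat_el :: "('a,'p) fm \<Rightarrow> ('a,'p,'w) model \<Rightarrow> 'w \<Rightarrow> bool" where
  "sat_el (Atom p) M w = (w \<in> Val M p)"
| "sat_el (Neg \<phi>) M w = (\<not> sat_el \<phi> M w)"
| "sat_el (Conj \<phi> \<psi>) M w = (sat_el \<phi> M w \<and> sat_el \<psi> M w)"
| "sat_el (K a \<phi>) M w = (\<forall>v\<in>W M. (w, v) \<in> Rel M a \<longrightarrow> sat_el \<phi> M v)"
| "sat_el (Ann \<phi> \<psi>) M w = False"
| "sat_el (GAnn G \<phi> \<psi>) M w = False"
| "sat_el (Coal G \<phi>) M w = False"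

primrec sat :: "('a,'p) fm \<Rightarrow> ('a,'p,'w) model \<Rightarrow> 'w \<Rightarrow> bool" where
  "sat (Atom p) M w = (w \<in> Val M p)"
| "sat (Neg \<phi>) M w = (\<not> sat \<phi> M w)"
| "sat (Conj \<phi> \<psi>) M w = (sat \<phi> M w \<and> sat \<psi> M w)"
| "sat (K a \<phi>) M w = (\<forall>v\<in>W M. (w, v) \<in> Rel M a \<longrightarrow> sat \<phi> M v)"
| "sat (Ann \<phi> \<psi>) M w = (sat \<phi> M w \<longrightarrow> sat \<psi> (restr M {v \<in> W M. sat \<phi> M v}) w)"
| "sat (GAnn G \<chi> \<phi>) M w =
     (sat \<chi> M w \<and>
      (\<forall>\<psi>\<in>LG G. (sat_el \<psi> M w \<and> sat \<chi> M w) \<longrightarrow>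
          sat \<phi> (restr M {v \<in> W M. sat_el \<psi> M v \<and> sat \<chi> M v}) w))"
| "sat (Coal G \<phi>) M w =
     (\<forall>\<psi>\<in>LG G. \<exists>\<chi>\<in>LG (- G). sat_el \<psi> M w \<longrightarrow>
        (sat_el \<psi> M w \<and> sat_el \<chi> M w \<and>
         sat \<phi> (restr M {v \<in> W M. sat_el \<psi> M v \<and> sat_el \<chi> M v}) w))"

text \<open>Sanity lemmas: the clauses above are the literal unfoldings of the paper's clauses.\<close>
lemma sat_el_sat: "is_el \<psi> \<Longrightarrow> sat_el \<psi> M w = sat \<psi> M w"
  by (induction \<psi> arbitrary: w) auto

lemma is_el_conjs: "\<forall>\<phi>\<in>set xs. is_el \<phi> \<Longrightarrow> is_el (conjs xs)"
  by (induction xs rule: conjs.induct) (auto simp: ftop_def fbot_def)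

lemma is_el_LG: "\<psi> \<in> LG G \<Longrightarrow> is_el \<psi>"
  unfolding LG_def by (auto intro!: is_el_conjs)

lemma sat_GAnn_unfold:
  "sat (GAnn G \<chi> \<phi>) M w \<longleftrightarrow> sat \<chi> M w \<and> (\<forall>\<psi>\<in>LG G. sat (Ann (Conj \<psi> \<chi>) \<phi>) M w)"
  by (simp add: sat_el_sat is_el_LG)

lemma sat_Coal_unfold:
  "sat (Coal G \<phi>) M w \<longleftrightarrow>
   (\<forall>\<psi>\<in>LG G. \<exists>\<chi>\<in>LG (- G). sat (fimp \<psi> (dAnn (Conj \<psi> \<chi>) \<phi>)) M w)"
  by (simp add: sat_el_sat is_el_LG fimp_def dAnn_def)

primrec tv :: "(('a,'p) fm \<Rightarrow> bool) \<Rightarrow> ('a,'p) fm \<Rightarrow> bool" where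
  "tv f (Atom p) = f (Atom p)"
| "tv f (Neg \<phi>) = (\<not> tv f \<phi>)"
| "tv f (Conj \<phi> \<psi>) = (tv f \<phi> \<and> tv f \<psi>)"
| "tv f (K a \<phi>) = f (K a \<phi>)"
| "tv f (Ann \<phi> \<psi>) = f (Ann \<phi> \<psi>)"
| "tv f (GAnn G \<phi> \<psi>) = f (GAnn G \<phi> \<psi>)"
| "tv f (Coal G \<phi>) = f (Coal G \<phi>)"

definition taut :: "('a,'p) fm \<Rightarrow> bool" where
  "taut \<phi> \<longleftrightarrow> (\<forall>f. tv f \<phi>)"

datatype ('a, 'p) nform =
    Hole
  | NImp "('a,'p) fm" "('a,'p) nform"
  | NK 'a "('a,'p) nform"
  | NAnn "('a,'p) fm" "('a,'p) nform"

primrec fill :: "('a,'p) nform \<Rightarrow> ('a,'p) fm \<Rightarrow> ('a,'p) fm" where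
  "fill Hole \<phi> = \<phi>"
| "fill (NImp \<psi> \<eta>) \<phi> = fimp \<psi> (fill \<eta> \<phi>)"
| "fill (NK a \<eta>) \<phi> = K a (fill \<eta> \<phi>)"
| "fill (NAnn \<psi> \<eta>) \<phi> = Ann \<psi> (fill \<eta> \<phi>)"

inductive_set CoRGAL :: "('a,'p) fm set" where
  A0: "taut \<phi> \<Longrightarrow> \<phi> \<in> CoRGAL"
| A1: "fimp (K a (fimp \<phi> \<psi>)) (fimp (K a \<phi>) (K a \<psi>)) \<in> CoRGAL"
| A2: "fimp (K a \<phi>) \<phi> \<in> CoRGAL"
| A3: "fimp (K a \<phi>) (K a (K a \<phi>)) \<in> CoRGAL"
| A4: "fimp (Neg (K a \<phi>)) (K a (Neg (K a \<phi>))) \<in> CoRGAL"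
| A5: "fiff (Ann \<phi> (Atom p)) (fimp \<phi> (Atom p)) \<in> CoRGAL"
| A6: "fiff (Ann \<phi> (Neg \<psi>)) (fimp \<phi> (Neg (Ann \<phi> \<psi>))) \<in> CoRGAL"
| A7: "fiff (Ann \<phi> (Conj \<psi> \<chi>)) (Conj (Ann \<phi> \<psi>) (Ann \<phi> \<chi>)) \<in> CoRGAL"
| A8: "fiff (Ann \<phi> (K a \<psi>)) (fimp \<phi> (K a (Ann \<phi> \<psi>))) \<in> CoRGAL"
| A9: "fiff (Ann \<phi> (Ann \<psi> \<chi>)) (Ann (Conj \<phi> (Ann \<phi> \<psi>)) \<chi>) \<in> CoRGAL"
| A10: "\<psi> \<in> LG G \<Longrightarrow> fimp (GAnn G \<chi> \<phi>) (Conj \<chi> (Ann (Conj \<psi> \<chi>) \<phi>)) \<in> CoRGAL"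
| A11: "\<psi> \<in> LG G \<Longrightarrow> fimp (Coal G \<phi>) (dGAnn (- G) \<psi> \<phi>) \<in> CoRGAL"
| R0: "\<phi> \<in> CoRGAL \<Longrightarrow> fimp \<phi> \<psi> \<in> CoRGAL \<Longrightarrow> \<psi> \<in> CoRGAL"
| R1: "\<phi> \<in> CoRGAL \<Longrightarrow> K a \<phi> \<in> CoRGAL"
| R2: "\<phi> \<in> CoRGAL \<Longrightarrow> Ann \<psi> \<phi> \<in> CoRGAL"
| R3: "\<phi> \<in> CoRGAL \<Longrightarrow> GAnn G \<chi> \<phi> \<in> CoRGAL"
| R4: "\<phi> \<in> CoRGAL \<Longrightarrow> Coal G \<phi> \<in> CoRGAL"
| R5: "(\<And>\<psi>. \<psi> \<in> LG G \<Longrightarrow> fill \<eta> (Conj \<chi> (Ann (Conj \<psi> \<chi>) \<phi>)) \<in> CoRGAL)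
        \<Longrightarrow> fill \<eta> (GAnn G \<chi> \<phi>) \<in> CoRGAL"
| R6: "(\<And>\<psi>. \<psi> \<in> LG G \<Longrightarrow> fill \<eta> (dGAnn (- G) \<psi> \<phi>) \<in> CoRGAL)
        \<Longrightarrow> fill \<eta> (Coal G \<phi>) \<in> CoRGAL"

definition is_theory :: "('a,'p) fm set \<Rightarrow> bool" where
  "is_theory x \<longleftrightarrow>
     CoRGAL \<subseteq> x \<and>
     (\<forall>\<phi> \<psi>. \<phi> \<in> x \<longrightarrow> fimp \<phi> \<psi> \<in> x \<longrightarrow> \<psi> \<in> x) \<and>
     (\<forall>\<eta> G \<chi> \<phi>. (\<forall>\<psi>\<in>LG G. fill \<eta> (Conj \<chi> (Ann (Conj \<psi> \<chi>) \<phi>)) \<in> x)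
                  \<longrightarrow> fill \<eta> (GAnn G \<chi> \<phi>) \<in> x) \<and>
     (\<forall>\<eta> G \<phi>. (\<forall>\<psi>\<in>LG G. fill \<eta> (dGAnn (- G) \<psi> \<phi>) \<in> x)
                  \<longrightarrow> fill \<eta> (Coal G \<phi>) \<in> x)"

definition consistent :: "('a,'p) fm set \<Rightarrow> bool" where
  "consistent x \<longleftrightarrow> fbot \<notin> x"

definition maximal :: "('a,'p) fm set \<Rightarrow> bool" where
  "maximal x \<longleftrightarrow> (\<forall>\<phi>. \<phi> \<in> x \<or> Neg \<phi> \<in> x)"

definition WC :: "('a,'p) fm set set" where
  "WC = {x. is_theory x \<and> consistent x \<and> maximal x}"

definition MC :: "('a, 'p, ('a,'p) fm set) model" where
  "MC = \<lparr>W = WC,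
         Rel = (\<lambda>a. {(x, y). x \<in> WC \<and> y \<in> WC \<and> {\<phi>. K a \<phi> \<in> x} = {\<phi>. K a \<phi> \<in> y}}),
         Val = (\<lambda>p. {x \<in> WC. Atom p \<in> x})\<rparr>"

end

theory Submission
  imports Defs
begin

text \<open>
  Theories are closed under the infinitary rules R5 and R6, so Lindenbaum's construction must,
  whenever it rejects the conclusion of an instance of such a rule, also reject one of its
  premises. The conclusion determines the instance, so one rejected premise per stage of an
  enumeration of all formulas suffices, and the union of the stages is again a theory.

  The truth lemma is proved by well-founded induction on the lexicographic pair
  (quantifier depth, size with announcements weighted). The reduction axioms A5--A9 decrease the
  size without increasing the depth. Unfolding \<open>[G,\<chi>]\<phi>\<close> and \<open>[\<langle>G\<rangle>]\<phi>\<close> into the formulas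
  they quantify over -- by A10 and A11 in one direction, by closure under R5 and R6 in the other --
  decreases the depth, because the quantified formulas \<open>\<psi>\<^sub>G\<close> are epistemic. The same argument
  works inside an announcement \<open>[\<alpha>]\<close>, using the necessity form \<open>[\<alpha>]\<sharp>\<close>.
\<close>

text \<open>\<open>countable_datatype\<close> cannot derive the instance for \<open>fm\<close> because of the \<open>'a set\<close>
  arguments, so formulas are encoded injectively into a countable tree type.\<close>

datatype code_tree = Node nat "code_tree list"

instance code_tree :: countable by countable_datatype

primrec code :: "('a::finite, 'p::countable) fm \<Rightarrow> code_tree" where
  "code (Atom p) = Node 0 [Node (to_nat p) []]"
| "code (Neg \<phi>) = Node 1 [code \<phi>]"
| "code (Conj \<phi> \<psi>) = Node 2 [code \<phi>, code \<psi>]"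
| "code (K a \<phi>) = Node 3 [Node (to_nat a) [], code \<phi>]"
| "code (Ann \<phi> \<psi>) = Node 4 [code \<phi>, code \<psi>]"
| "code (GAnn G \<phi> \<psi>) = Node 5 [Node (to_nat G) [], code \<phi>, code \<psi>]"
| "code (Coal G \<phi>) = Node 6 [Node (to_nat G) [], code \<phi>]"

lemma code_inject: "code \<phi> = code \<psi> \<Longrightarrow> \<phi> = \<psi>"
  by (induction \<phi> arbitrary: \<psi>; case_tac \<psi>; simp)

instance fm :: (finite, countable) countable
  by (rule countable_classI[of "to_nat \<circ> code"]) (simp add: code_inject)

lemma LG_nonempty: "LG (G :: 'a::finite set) \<noteq> {}"
proof -
  obtain xs where "distinct xs" "set xs = G"
    using finite_distinct_list[of G] by auto
  then have "conjs (map (\<lambda>i. K i ftop) xs) \<in> LG G"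
    unfolding LG_def by (auto intro!: exI[of _ xs] exI[of _ "\<lambda>i. ftop"] simp: ftop_def fbot_def)
  then show ?thesis by blast
qed

primrec nest :: "('a,'p) nform \<Rightarrow> ('a,'p) nform \<Rightarrow> ('a,'p) nform" where
  "nest Hole \<eta> = \<eta>"
| "nest (NImp \<psi> \<zeta>) \<eta> = NImp \<psi> (nest \<zeta> \<eta>)"
| "nest (NK a \<zeta>) \<eta> = NK a (nest \<zeta> \<eta>)"
| "nest (NAnn \<psi> \<zeta>) \<eta> = NAnn \<psi> (nest \<zeta> \<eta>)"

lemma fill_nest: "fill (nest \<zeta> \<eta>) \<phi> = fill \<zeta> (fill \<eta> \<phi>)"
  by (induction \<zeta>) simp_all

lemma fill_quantifier_inject:
  "fill \<eta> (GAnn G \<chi> \<phi>) = fill \<eta>' (GAnn G' \<chi>' \<phi>') \<longleftrightarrow> \<eta> = \<eta>' \<and> G = G' \<and> \<chi> = \<chi>' \<and> \<phi> = \<phi>'"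
  "fill \<eta> (Coal G \<phi>) = fill \<eta>' (Coal G' \<phi>') \<longleftrightarrow> \<eta> = \<eta>' \<and> G = G' \<and> \<phi> = \<phi>'"
  "fill \<eta> (GAnn G \<chi> \<phi>) \<noteq> fill \<eta>' (Coal G' \<phi>')"
  by (induction \<eta> arbitrary: \<eta>'; case_tac \<eta>'; simp add: fimp_def)+

lemma theory_CoRGAL: "is_theory x \<Longrightarrow> \<phi> \<in> CoRGAL \<Longrightarrow> \<phi> \<in> x"
  unfolding is_theory_def by blast

lemma theory_mp: "is_theory x \<Longrightarrow> \<phi> \<in> x \<Longrightarrow> fimp \<phi> \<psi> \<in> x \<Longrightarrow> \<psi> \<in> x"
  unfolding is_theory_def by blast

lemma theory_R5:
  "is_theory x \<Longrightarrow> (\<And>\<psi>. \<psi> \<in> LG G \<Longrightarrow> fill \<eta> (Conj \<chi> (Ann (Conj \<psi> \<chi>) \<phi>)) \<in> x)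
    \<Longrightarrow> fill \<eta> (GAnn G \<chi> \<phi>) \<in> x"
  unfolding is_theory_def by blast

lemma theory_R6:
  "is_theory x \<Longrightarrow> (\<And>\<psi>. \<psi> \<in> LG G \<Longrightarrow> fill \<eta> (dGAnn (- G) \<psi> \<phi>) \<in> x) \<Longrightarrow> fill \<eta> (Coal G \<phi>) \<in> x"
  unfolding is_theory_def by blast

lemma theory_taut_mp: "is_theory x \<Longrightarrow> \<phi> \<in> x \<Longrightarrow> taut (fimp \<phi> \<psi>) \<Longrightarrow> \<psi> \<in> x"
  using theory_mp theory_CoRGAL CoRGAL.A0 by metis

lemma theory_taut_mp2:
  "is_theory x \<Longrightarrow> \<phi> \<in> x \<Longrightarrow> \<psi> \<in> x \<Longrightarrow> taut (fimp \<phi> (fimp \<psi> \<chi>)) \<Longrightarrow> \<chi> \<in> x"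
  using theory_mp theory_taut_mp by metis

lemma theory_contradiction: "is_theory x \<Longrightarrow> consistent x \<Longrightarrow> \<phi> \<in> x \<Longrightarrow> Neg \<phi> \<in> x \<Longrightarrow> False"
  using theory_taut_mp2[of x \<phi> "Neg \<phi>" fbot]
  by (auto simp: consistent_def taut_def fimp_def fbot_def)

definition rule_premises :: "('a,'p) fm \<Rightarrow> ('a,'p) fm set set" where
  "rule_premises \<phi> =
     {(\<lambda>\<psi>. fill \<eta> (Conj \<chi> (Ann (Conj \<psi> \<chi>) \<theta>))) ` LG G | \<eta> G \<chi> \<theta>. \<phi> = fill \<eta> (GAnn G \<chi> \<theta>)} \<union>
     {(\<lambda>\<psi>. fill \<eta> (dGAnn (- G) \<psi> \<theta>)) ` LG G | \<eta> G \<theta>. \<phi> = fill \<eta> (Coal G \<theta>)}"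

lemma GAnn_rule_premises:
  "(\<lambda>\<psi>. fill \<eta> (Conj \<chi> (Ann (Conj \<psi> \<chi>) \<phi>))) ` LG G \<in> rule_premises (fill \<eta> (GAnn G \<chi> \<phi>))"
  unfolding rule_premises_def by blast

lemma Coal_rule_premises:
  "(\<lambda>\<psi>. fill \<eta> (dGAnn (- G) \<psi> \<phi>)) ` LG G \<in> rule_premises (fill \<eta> (Coal G \<phi>))"
  unfolding rule_premises_def by blast

lemma rule_premisesE:
  assumes "P \<in> rule_premises \<phi>"
  obtains (GAnn) \<eta> G \<chi> \<theta> where "\<phi> = fill \<eta> (GAnn G \<chi> \<theta>)"
      "P = (\<lambda>\<psi>. fill \<eta> (Conj \<chi> (Ann (Conj \<psi> \<chi>) \<theta>))) ` LG G"
  | (Coal) \<eta> G \<theta> where "\<phi> = fill \<eta> (Coal G \<theta>)" "P = (\<lambda>\<psi>. fill \<eta> (dGAnn (- G) \<psi> \<theta>)) ` LG G"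
  using assms unfolding rule_premises_def by blast

lemma theory_rule_premises: "is_theory x \<Longrightarrow> P \<in> rule_premises \<phi> \<Longrightarrow> P \<subseteq> x \<Longrightarrow> \<phi> \<in> x"
  by (erule rule_premisesE) (auto intro: theory_R5 theory_R6)

lemma is_theoryI:
  assumes "CoRGAL \<subseteq> x" and "\<And>\<phi> \<psi>. \<phi> \<in> x \<Longrightarrow> fimp \<phi> \<psi> \<in> x \<Longrightarrow> \<psi> \<in> x"
    and premises_closed: "\<And>\<phi> P. P \<in> rule_premises \<phi> \<Longrightarrow> P \<subseteq> x \<Longrightarrow> \<phi> \<in> x"
  shows "is_theory x"
  unfolding is_theory_def
proof (intro conjI allI impI)
  fix \<eta> G \<chi> \<phi>
  assume "\<forall>\<psi>\<in>LG G. fill \<eta> (Conj \<chi> (Ann (Conj \<psi> \<chi>) \<phi>)) \<in> x"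
  then show "fill \<eta> (GAnn G \<chi> \<phi>) \<in> x"
    by (blast intro: premises_closed[OF GAnn_rule_premises])
next
  fix \<eta> G \<phi>
  assume "\<forall>\<psi>\<in>LG G. fill \<eta> (dGAnn (- G) \<psi> \<phi>) \<in> x"
  then show "fill \<eta> (Coal G \<phi>) \<in> x"
    by (blast intro: premises_closed[OF Coal_rule_premises])
qed (use assms in blast)+

lemma rule_premises_unique: "P \<in> rule_premises \<phi> \<Longrightarrow> Q \<in> rule_premises \<phi> \<Longrightarrow> P = Q"
  by (erule rule_premisesE; erule rule_premisesE)
    (auto simp: fill_quantifier_inject fill_quantifier_inject(3)[THEN not_sym])

lemma rule_premises_fill: "P \<in> rule_premises \<phi> \<Longrightarrow> fill \<zeta> ` P \<in> rule_premises (fill \<zeta> \<phi>)"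
proof (erule rule_premisesE)
  fix \<eta> G \<chi> \<theta>
  assume "\<phi> = fill \<eta> (GAnn G \<chi> \<theta>)" "P = (\<lambda>\<psi>. fill \<eta> (Conj \<chi> (Ann (Conj \<psi> \<chi>) \<theta>))) ` LG G"
  then show ?thesis
    using GAnn_rule_premises[of "nest \<zeta> \<eta>"] by (simp add: image_image fill_nest)
next
  fix \<eta> G \<theta>
  assume "\<phi> = fill \<eta> (Coal G \<theta>)" "P = (\<lambda>\<psi>. fill \<eta> (dGAnn (- G) \<psi> \<theta>)) ` LG G"
  then show ?thesis
    using Coal_rule_premises[of "nest \<zeta> \<eta>"] by (simp add: image_image fill_nest)
qed

lemma is_theory_preimage:
  assumes x: "is_theory x"
    and f_CoRGAL: "\<And>\<phi>. \<phi> \<in> CoRGAL \<Longrightarrow> f \<phi> \<in> x"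
    and f_mp: "\<And>\<phi> \<psi>. f \<phi> \<in> x \<Longrightarrow> f (fimp \<phi> \<psi>) \<in> x \<Longrightarrow> f \<psi> \<in> x"
    and f_premises: "\<And>P \<phi>. P \<in> rule_premises \<phi> \<Longrightarrow> f ` P \<in> rule_premises (f \<phi>)"
  shows "is_theory {\<phi>. f \<phi> \<in> x}"
proof (rule is_theoryI)
  show "CoRGAL \<subseteq> {\<phi>. f \<phi> \<in> x}" using f_CoRGAL by blast
next
  fix \<phi> \<psi> assume "\<phi> \<in> {\<phi>. f \<phi> \<in> x}" and "fimp \<phi> \<psi> \<in> {\<phi>. f \<phi> \<in> x}"
  then show "\<psi> \<in> {\<phi>. f \<phi> \<in> x}" using f_mp by blast
next
  fix \<phi> P assume "P \<in> rule_premises \<phi>" and "P \<subseteq> {\<phi>. f \<phi> \<in> x}"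
  then show "\<phi> \<in> {\<phi>. f \<phi> \<in> x}"
    using theory_rule_premises[OF x f_premises] by blast
qed

abbreviation expand :: "('a,'p) fm set \<Rightarrow> ('a,'p) fm \<Rightarrow> ('a,'p) fm set" where
  "expand x \<phi> \<equiv> {\<psi>. fimp \<phi> \<psi> \<in> x}"

lemma is_theory_expand:
  fixes x :: "('a,'p) fm set"
  assumes x: "is_theory x"
  shows "is_theory (expand x \<phi>)"
proof (rule is_theory_preimage[OF x])
  fix \<psi> :: "('a,'p) fm" assume "\<psi> \<in> CoRGAL"
  then show "fimp \<phi> \<psi> \<in> x"
    using theory_taut_mp[OF x theory_CoRGAL[OF x], of \<psi> "fimp \<phi> \<psi>"] by (simp add: taut_def fimp_def)
next
  fix \<psi> \<chi> :: "('a,'p) fm" assume "fimp \<phi> \<psi> \<in> x" "fimp \<phi> (fimp \<psi> \<chi>) \<in> x"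
  then show "fimp \<phi> \<chi> \<in> x"
    by (rule theory_taut_mp2[OF x]) (simp add: taut_def fimp_def)
next
  fix P and \<psi> :: "('a,'p) fm" assume "P \<in> rule_premises \<psi>"
  then show "fimp \<phi> ` P \<in> rule_premises (fimp \<phi> \<psi>)"
    using rule_premises_fill[of P \<psi> "NImp \<phi> Hole"] by simp
qed

lemma subset_expand: "is_theory x \<Longrightarrow> x \<subseteq> expand x \<phi>"
  using theory_taut_mp[of x _ "fimp \<phi> _"] by (auto simp: taut_def fimp_def)

lemma mem_expand: "is_theory x \<Longrightarrow> \<phi> \<in> expand x \<phi>"
  using theory_CoRGAL[OF _ CoRGAL.A0, of x "fimp \<phi> \<phi>"] by (simp add: taut_def fimp_def)

lemma is_theory_K_preimage:
  fixes x :: "('a,'p) fm set"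
  assumes x: "is_theory x"
  shows "is_theory {\<psi>. K a \<psi> \<in> x}"
proof (rule is_theory_preimage[OF x])
  fix \<psi> :: "('a,'p) fm" assume "\<psi> \<in> CoRGAL"
  then show "K a \<psi> \<in> x" by (rule theory_CoRGAL[OF x CoRGAL.R1])
next
  fix \<psi> \<chi> :: "('a,'p) fm" assume "K a \<psi> \<in> x" "K a (fimp \<psi> \<chi>) \<in> x"
  then show "K a \<chi> \<in> x"
    using theory_mp[OF x] theory_CoRGAL[OF x CoRGAL.A1] by metis
next
  fix P and \<psi> :: "('a,'p) fm" assume "P \<in> rule_premises \<psi>"
  then show "K a ` P \<in> rule_premises (K a \<psi>)"
    using rule_premises_fill[of P \<psi> "NK a Hole"] by simp
qed

section \<open>Lindenbaum's lemma\<close>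

definition deciding_extension :: "('a,'p) fm set \<Rightarrow> ('a,'p) fm \<Rightarrow> ('a,'p) fm set \<Rightarrow> bool" where
  "deciding_extension x \<phi> y \<longleftrightarrow> is_theory y \<and> consistent y \<and> x \<subseteq> y \<and>
     (\<phi> \<in> y \<or> Neg \<phi> \<in> y \<and> (\<forall>P\<in>rule_premises \<phi>. \<exists>\<psi>\<in>P. Neg \<psi> \<in> y))"

lemma deciding_extension_exists:
  assumes x: "is_theory x" and c: "consistent x"
  shows "\<exists>y. deciding_extension x \<phi> y"
proof (cases "consistent (expand x \<phi>)")
  case True
  then have "deciding_extension x \<phi> (expand x \<phi>)"
    using is_theory_expand[OF x, of \<phi>] subset_expand[OF x, of \<phi>] mem_expand[OF x, of \<phi>]
    unfolding deciding_extension_def by blast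
  then show ?thesis ..
next
  case False
  then have "fimp \<phi> fbot \<in> x" by (simp add: consistent_def)
  then have neg: "Neg \<phi> \<in> x"
    by (rule theory_taut_mp[OF x]) (simp add: taut_def fimp_def fbot_def)
  show ?thesis
  proof (cases "rule_premises \<phi> = {}")
    case True
    then have "deciding_extension x \<phi> x"
      using x c neg unfolding deciding_extension_def by blast
    then show ?thesis ..
  next
    case False
    then obtain P where P: "P \<in> rule_premises \<phi>" by blast
    have "\<phi> \<notin> x" using theory_contradiction[OF x c _ neg] by blast
    then obtain \<psi> where \<psi>: "\<psi> \<in> P" "\<psi> \<notin> x" using theory_rule_premises[OF x P] by blast
    have "fimp (Neg \<psi>) fbot \<notin> x"
      using theory_taut_mp[OF x _, of "fimp (Neg \<psi>) fbot" \<psi>] \<psi>(2)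
      by (auto simp: taut_def fimp_def fbot_def)
    then have "consistent (expand x (Neg \<psi>))" by (simp add: consistent_def)
    moreover have "Neg \<phi> \<in> expand x (Neg \<psi>)" using neg subset_expand[OF x, of "Neg \<psi>"] by blast
    moreover have "\<forall>Q\<in>rule_premises \<phi>. \<exists>\<psi>'\<in>Q. Neg \<psi>' \<in> expand x (Neg \<psi>)"
      using rule_premises_unique[OF P] \<psi>(1) mem_expand[OF x, of "Neg \<psi>"] by blast
    ultimately have "deciding_extension x \<phi> (expand x (Neg \<psi>))"
      using is_theory_expand[OF x, of "Neg \<psi>"] subset_expand[OF x, of "Neg \<psi>"]
      unfolding deciding_extension_def by blast
    then show ?thesis ..
  qed
qed

primrec lindenbaum_chain :: "('a::finite,'p::countable) fm set \<Rightarrow> nat \<Rightarrow> ('a,'p) fm set" where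
  "lindenbaum_chain x 0 = x"
| "lindenbaum_chain x (Suc n) = (SOME y. deciding_extension (lindenbaum_chain x n) (from_nat n) y)"

definition lindenbaum_limit :: "('a::finite,'p::countable) fm set \<Rightarrow> ('a,'p) fm set" where
  "lindenbaum_limit x = (\<Union>n. lindenbaum_chain x n)"

context
  fixes x :: "('a::finite,'p::countable) fm set"
  assumes x: "is_theory x" and c: "consistent x"
begin

lemma lindenbaum_chain_theory: "is_theory (lindenbaum_chain x n) \<and> consistent (lindenbaum_chain x n)"
proof (induction n)
  case 0
  show ?case using x c by simp
next
  case (Suc n)
  then show ?case
    using someI_ex[OF deciding_extension_exists, of "lindenbaum_chain x n" "from_nat n"]
    by (simp add: deciding_extension_def)
qed

lemma lindenbaum_chain_step:
  "deciding_extension (lindenbaum_chain x n) (from_nat n) (lindenbaum_chain x (Suc n))"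
  using lindenbaum_chain_theory[of n]
    someI_ex[OF deciding_extension_exists, of "lindenbaum_chain x n" "from_nat n"]
  by simp

lemma lindenbaum_chain_mono: "m \<le> n \<Longrightarrow> lindenbaum_chain x m \<subseteq> lindenbaum_chain x n"
  using lift_Suc_mono_le[of "lindenbaum_chain x"] lindenbaum_chain_step
  by (simp add: deciding_extension_def)

lemma lindenbaum_limit_common_stage:
  assumes "\<phi> \<in> lindenbaum_limit x" and "\<psi> \<in> lindenbaum_limit x"
  shows "\<exists>n. \<phi> \<in> lindenbaum_chain x n \<and> \<psi> \<in> lindenbaum_chain x n"
proof -
  obtain m where "\<phi> \<in> lindenbaum_chain x m" using assms(1) unfolding lindenbaum_limit_def by blast
  moreover obtain k where "\<psi> \<in> lindenbaum_chain x k" using assms(2) unfolding lindenbaum_limit_def by blast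
  ultimately show ?thesis
    using lindenbaum_chain_mono[OF max.cobounded1, of m k] lindenbaum_chain_mono[OF max.cobounded2, of k m]
    by blast
qed

lemma lindenbaum_limit_contradiction:
  assumes "\<phi> \<in> lindenbaum_limit x" and "Neg \<phi> \<in> lindenbaum_limit x"
  shows False
proof -
  obtain n where "\<phi> \<in> lindenbaum_chain x n" "Neg \<phi> \<in> lindenbaum_chain x n"
    using lindenbaum_limit_common_stage[OF assms] by blast
  then show False using theory_contradiction lindenbaum_chain_theory[of n] by blast
qed

lemma lindenbaum_limit_decides:
  "\<phi> \<in> lindenbaum_limit x \<or>
   Neg \<phi> \<in> lindenbaum_limit x \<and> (\<forall>P\<in>rule_premises \<phi>. \<exists>\<psi>\<in>P. Neg \<psi> \<in> lindenbaum_limit x)"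
proof -
  have "deciding_extension (lindenbaum_chain x (to_nat \<phi>)) \<phi> (lindenbaum_chain x (Suc (to_nat \<phi>)))"
    using lindenbaum_chain_step[of "to_nat \<phi>"] by (simp only: from_nat_to_nat)
  moreover have "lindenbaum_chain x (Suc (to_nat \<phi>)) \<subseteq> lindenbaum_limit x"
    unfolding lindenbaum_limit_def by blast
  ultimately show ?thesis unfolding deciding_extension_def by blast
qed

lemma lindenbaum: "\<exists>z\<in>WC. x \<subseteq> z"
proof
  let ?z = "lindenbaum_limit x"
  show "x \<subseteq> ?z"
    unfolding lindenbaum_limit_def by (metis UN_upper UNIV_I lindenbaum_chain.simps(1))
  have "is_theory ?z"
  proof (rule is_theoryI)
    show "CoRGAL \<subseteq> ?z" using theory_CoRGAL[OF x] \<open>x \<subseteq> ?z\<close> by blast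
  next
    fix \<phi> \<psi> assume "\<phi> \<in> ?z" "fimp \<phi> \<psi> \<in> ?z"
    then obtain n where "\<phi> \<in> lindenbaum_chain x n" "fimp \<phi> \<psi> \<in> lindenbaum_chain x n"
      using lindenbaum_limit_common_stage by blast
    then have "\<psi> \<in> lindenbaum_chain x n"
      using theory_mp lindenbaum_chain_theory[of n] by blast
    then show "\<psi> \<in> ?z" unfolding lindenbaum_limit_def by blast
  next
    fix \<phi> P assume P: "P \<in> rule_premises \<phi>" "P \<subseteq> ?z"
    show "\<phi> \<in> ?z"
    proof (rule ccontr)
      assume "\<phi> \<notin> ?z"
      then obtain \<psi> where "\<psi> \<in> P" "Neg \<psi> \<in> ?z" using lindenbaum_limit_decides[of \<phi>] P(1) by blast
      then show False using lindenbaum_limit_contradiction P(2) by blast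
    qed
  qed
  moreover have "consistent ?z"
    using lindenbaum_chain_theory unfolding lindenbaum_limit_def consistent_def by blast
  moreover have "maximal ?z"
    using lindenbaum_limit_decides unfolding maximal_def by blast
  ultimately show "?z \<in> WC" unfolding WC_def by blast
qed

end

lemma WC_theory: "x \<in> WC \<Longrightarrow> is_theory x"
  by (simp add: WC_def)

lemma WC_CoRGAL: "x \<in> WC \<Longrightarrow> \<phi> \<in> CoRGAL \<Longrightarrow> \<phi> \<in> x"
  by (simp add: WC_def theory_CoRGAL)

lemma WC_CoRGAL_mp: "x \<in> WC \<Longrightarrow> fimp \<phi> \<psi> \<in> CoRGAL \<Longrightarrow> \<phi> \<in> x \<Longrightarrow> \<psi> \<in> x"
  by (meson WC_CoRGAL WC_theory theory_mp)

lemma WC_Neg: "x \<in> WC \<Longrightarrow> Neg \<phi> \<in> x \<longleftrightarrow> \<phi> \<notin> x"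
  using theory_contradiction[of x \<phi>] by (auto simp: WC_def maximal_def)

lemma WC_Conj:
  assumes "x \<in> WC"
  shows "Conj \<phi> \<psi> \<in> x \<longleftrightarrow> \<phi> \<in> x \<and> \<psi> \<in> x"
  using theory_taut_mp[OF WC_theory[OF assms], of "Conj \<phi> \<psi>" \<phi>]
    theory_taut_mp[OF WC_theory[OF assms], of "Conj \<phi> \<psi>" \<psi>]
    theory_taut_mp2[OF WC_theory[OF assms], of \<phi> \<psi> "Conj \<phi> \<psi>"]
  by (auto simp: taut_def fimp_def)

lemma WC_fimp: "x \<in> WC \<Longrightarrow> fimp \<phi> \<psi> \<in> x \<longleftrightarrow> (\<phi> \<in> x \<longrightarrow> \<psi> \<in> x)"
  by (simp add: fimp_def WC_Neg WC_Conj)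

lemma WC_fiff: "x \<in> WC \<Longrightarrow> fiff \<phi> \<psi> \<in> CoRGAL \<Longrightarrow> \<phi> \<in> x \<longleftrightarrow> \<psi> \<in> x"
  using WC_CoRGAL[of x "fiff \<phi> \<psi>"] by (simp add: fiff_def WC_Conj WC_fimp) blast

lemma WC_GAnn_iff:
  fixes G :: "'a::finite set"
  assumes x: "x \<in> WC"
  shows "GAnn G \<chi> \<phi> \<in> x \<longleftrightarrow> \<chi> \<in> x \<and> (\<forall>\<psi>\<in>LG G. Ann (Conj \<psi> \<chi>) \<phi> \<in> x)"
proof
  assume "GAnn G \<chi> \<phi> \<in> x"
  then have "Conj \<chi> (Ann (Conj \<psi> \<chi>) \<phi>) \<in> x" if "\<psi> \<in> LG G" for \<psi>
    by (rule WC_CoRGAL_mp[OF x CoRGAL.A10[OF that]])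
  then show "\<chi> \<in> x \<and> (\<forall>\<psi>\<in>LG G. Ann (Conj \<psi> \<chi>) \<phi> \<in> x)"
    using LG_nonempty[of G] unfolding WC_Conj[OF x] by blast
next
  assume "\<chi> \<in> x \<and> (\<forall>\<psi>\<in>LG G. Ann (Conj \<psi> \<chi>) \<phi> \<in> x)"
  then show "GAnn G \<chi> \<phi> \<in> x"
    using theory_R5[OF WC_theory[OF x], of G Hole \<chi> \<phi>] by (simp add: WC_Conj[OF x])
qed

lemma WC_Coal_iff:
  assumes x: "x \<in> WC"
  shows "Coal G \<phi> \<in> x \<longleftrightarrow> (\<forall>\<psi>\<in>LG G. dGAnn (- G) \<psi> \<phi> \<in> x)"
proof
  assume "Coal G \<phi> \<in> x"
  then show "\<forall>\<psi>\<in>LG G. dGAnn (- G) \<psi> \<phi> \<in> x"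
    using WC_CoRGAL_mp[OF x CoRGAL.A11] by blast
next
  assume "\<forall>\<psi>\<in>LG G. dGAnn (- G) \<psi> \<phi> \<in> x"
  then show "Coal G \<phi> \<in> x"
    using theory_R6[OF WC_theory[OF x], of G Hole \<phi>] by simp
qed

lemma WC_Ann_mp:
  assumes x: "x \<in> WC" and "\<alpha> \<in> x" and "Ann \<alpha> (fimp \<phi> \<psi>) \<in> x" and "Ann \<alpha> \<phi> \<in> x"
  shows "Ann \<alpha> \<psi> \<in> x"
proof -
  have Ann_Neg: "Ann \<alpha> (Neg \<chi>) \<in> x \<longleftrightarrow> \<alpha> \<notin> x \<or> Ann \<alpha> \<chi> \<notin> x" for \<chi>
    using WC_fiff[OF x CoRGAL.A6[of \<alpha> \<chi>]] by (simp add: WC_fimp[OF x] WC_Neg[OF x])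
  have Ann_Conj: "Ann \<alpha> (Conj \<chi> \<chi>') \<in> x \<longleftrightarrow> Ann \<alpha> \<chi> \<in> x \<and> Ann \<alpha> \<chi>' \<in> x" for \<chi> \<chi>'
    using WC_fiff[OF x CoRGAL.A7[of \<alpha> \<chi> \<chi>']] by (simp add: WC_Conj[OF x])
  show ?thesis using assms(2-) unfolding fimp_def Ann_Neg Ann_Conj by blast
qed

section \<open>The canonical model\<close>

lemma W_MC [simp]: "W MC = WC"
  and Rel_MC [simp]: "Rel MC a = {(x, y). x \<in> WC \<and> y \<in> WC \<and> {\<phi>. K a \<phi> \<in> x} = {\<phi>. K a \<phi> \<in> y}}"
  and Val_MC [simp]: "Val MC p = {x \<in> WC. Atom p \<in> x}"
  by (simp_all add: MC_def)

lemma K_existence: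
  fixes x :: "('a::finite,'p::countable) fm set"
  assumes x: "x \<in> WC" and "K a \<phi> \<notin> x"
  shows "\<exists>z\<in>WC. {\<psi>. K a \<psi> \<in> x} = {\<psi>. K a \<psi> \<in> z} \<and> \<phi> \<notin> z"
proof -
  let ?Kx = "{\<psi>. K a \<psi> \<in> x}"
  have Kx: "is_theory ?Kx" by (rule is_theory_K_preimage[OF WC_theory[OF x]])
  have "taut (fimp (fimp (Neg \<phi>) fbot) \<phi>)" by (simp add: taut_def fimp_def fbot_def)
  then have "fimp (fimp (Neg \<phi>) fbot) \<phi> \<in> ?Kx"
    using WC_CoRGAL[OF x CoRGAL.R1[OF CoRGAL.A0]] by blast
  then have "fimp (Neg \<phi>) fbot \<notin> ?Kx"
    using theory_mp[OF Kx, of "fimp (Neg \<phi>) fbot" \<phi>] \<open>K a \<phi> \<notin> x\<close> by blast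
  then have "consistent (expand ?Kx (Neg \<phi>))" by (simp add: consistent_def)
  then obtain z where z: "z \<in> WC" and sub: "expand ?Kx (Neg \<phi>) \<subseteq> z"
    using lindenbaum[OF is_theory_expand[OF Kx]] by blast
  have "\<phi> \<notin> z" using sub mem_expand[OF Kx, of "Neg \<phi>"] WC_Neg[OF z] by blast
  have Kx_z: "?Kx \<subseteq> z" using sub subset_expand[OF Kx, of "Neg \<phi>"] by blast
  have "K a \<psi> \<in> z" if "K a \<psi> \<in> x" for \<psi>
  proof -
    have "K a (K a \<psi>) \<in> x" by (rule WC_CoRGAL_mp[OF x CoRGAL.A3 that])
    then show ?thesis using Kx_z by blast
  qed
  moreover have "K a \<psi> \<in> x" if "K a \<psi> \<in> z" for \<psi>
  proof (rule ccontr)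
    assume "K a \<psi> \<notin> x"
    then have "Neg (K a \<psi>) \<in> x" by (simp add: WC_Neg[OF x])
    then have "K a (Neg (K a \<psi>)) \<in> x" by (rule WC_CoRGAL_mp[OF x CoRGAL.A4])
    then have "Neg (K a \<psi>) \<in> z" using Kx_z by blast
    then show False using that WC_Neg[OF z] by blast
  qed
  ultimately show ?thesis using z \<open>\<phi> \<notin> z\<close> by blast
qed

lemma truth_K:
  fixes x :: "('a::finite,'p::countable) fm set"
  assumes x: "x \<in> WC" and IH: "\<And>y. y \<in> WC \<Longrightarrow> \<phi> \<in> y \<longleftrightarrow> sat \<phi> MC y"
  shows "K a \<phi> \<in> x \<longleftrightarrow> sat (K a \<phi>) MC x"
proof
  assume "K a \<phi> \<in> x"
  then have "\<phi> \<in> y" if "y \<in> WC" and "{\<psi>. K a \<psi> \<in> x} = {\<psi>. K a \<psi> \<in> y}" for y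
  proof -
    have "K a \<phi> \<in> y" using \<open>K a \<phi> \<in> x\<close> that(2) by blast
    then show ?thesis by (rule WC_CoRGAL_mp[OF that(1) CoRGAL.A2])
  qed
  then show "sat (K a \<phi>) MC x" using IH by simp
next
  assume sat_K: "sat (K a \<phi>) MC x"
  show "K a \<phi> \<in> x"
  proof (rule ccontr)
    assume "K a \<phi> \<notin> x"
    then obtain z where "z \<in> WC" "{\<psi>. K a \<psi> \<in> x} = {\<psi>. K a \<psi> \<in> z}" "\<phi> \<notin> z"
      using K_existence[OF x] by blast
    then show False using sat_K x IH[of z] by simp
  qed
qed

lemma restr_simps [simp]:
  "W (restr M S) = W M \<inter> S"
  "Rel (restr M S) a = Rel M a \<inter> (S \<times> S)"
  "Val (restr M S) p = Val M p \<inter> S"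
  by (simp_all add: restr_def)

lemma restr_restr: "restr (restr M S) T = restr M (S \<inter> T)"
  by (simp add: restr_def Int_ac Times_Int_Times)

lemma sat_Ann_Atom: "w \<in> W M \<Longrightarrow> sat (Ann \<alpha> (Atom p)) M w \<longleftrightarrow> sat (fimp \<alpha> (Atom p)) M w"
  by (auto simp: fimp_def)

lemma sat_Ann_Neg: "sat (Ann \<alpha> (Neg \<beta>)) M w \<longleftrightarrow> sat (fimp \<alpha> (Neg (Ann \<alpha> \<beta>))) M w"
  by (auto simp: fimp_def)

lemma sat_Ann_Conj: "sat (Ann \<alpha> (Conj \<beta> \<gamma>)) M w \<longleftrightarrow> sat (Conj (Ann \<alpha> \<beta>) (Ann \<alpha> \<gamma>)) M w"
  by auto

lemma sat_Ann_K: "w \<in> W M \<Longrightarrow> sat (Ann \<alpha> (K a \<beta>)) M w \<longleftrightarrow> sat (fimp \<alpha> (K a (Ann \<alpha> \<beta>))) M w"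
  by (auto simp: fimp_def)

lemma sat_Ann_Ann: "sat (Ann \<alpha> (Ann \<beta> \<gamma>)) M w \<longleftrightarrow> sat (Ann (Conj \<alpha> (Ann \<alpha> \<beta>)) \<gamma>) M w"
proof -
  let ?M = "restr M {v \<in> W M. sat \<alpha> M v}"
  have "restr ?M {v \<in> W ?M. sat \<beta> ?M v} = restr M {v \<in> W M. sat (Conj \<alpha> (Ann \<alpha> \<beta>)) M v}"
    unfolding restr_restr by (rule arg_cong[where f = "restr M"]) auto
  then show ?thesis by (simp only: sat.simps(3,5)) blast
qed

lemma sat_Ann_Conj_commute: "sat (Ann (Conj \<alpha> \<beta>) \<gamma>) M w \<longleftrightarrow> sat (Ann (Conj \<beta> \<alpha>) \<gamma>) M w"
proof -
  have "{v \<in> W M. sat (Conj \<alpha> \<beta>) M v} = {v \<in> W M. sat (Conj \<beta> \<alpha>) M v}" by auto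
  then show ?thesis by (simp only: sat.simps(3,5) conj_commute)
qed

lemma sat_GAnn_iff:
  fixes G :: "'a::finite set"
  shows "sat (GAnn G \<chi> \<phi>) M w \<longleftrightarrow> (\<forall>\<psi>\<in>LG G. sat (Conj \<chi> (Ann (Conj \<psi> \<chi>) \<phi>)) M w)"
  using LG_nonempty[of G] unfolding sat_GAnn_unfold by (simp only: sat.simps(3,5)) blast

lemma sat_Coal_iff:
  fixes G :: "'a::finite set"
  shows "sat (Coal G \<phi>) M w \<longleftrightarrow> (\<forall>\<psi>\<in>LG G. sat (dGAnn (- G) \<psi> \<phi>) M w)"
proof -
  have "(\<exists>\<chi>\<in>LG (- G). sat (fimp \<psi> (dAnn (Conj \<psi> \<chi>) \<phi>)) M w) \<longleftrightarrow> sat (dGAnn (- G) \<psi> \<phi>) M w"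
    for \<psi>
    using LG_nonempty[of "- G"] sat_Ann_Conj_commute[of \<psi> _ "Neg \<phi>" M w]
    unfolding fimp_def dAnn_def dGAnn_def by (simp only: sat.simps(2,3) sat_GAnn_unfold) blast
  then show ?thesis unfolding sat_Coal_unfold by blast
qed

lemma sat_Ann_Ball:
  fixes M :: "('a,'p,'w) model"
  assumes "\<And>(M' :: ('a,'p,'w) model) w'. sat Q M' w' \<longleftrightarrow> (\<forall>\<psi>\<in>L. sat (F \<psi>) M' w')"
  shows "sat (Ann \<alpha> Q) M w \<longleftrightarrow> (\<forall>\<psi>\<in>L. sat (Ann \<alpha> (F \<psi>)) M w)"
  using assms by (simp only: sat.simps(5)) blast

section \<open>The truth lemma\<close>

text \<open>The reduction axioms A5--A9 do not increase \<open>qdepth\<close> (it is additive under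
  announcements because of A9), and the factor \<open>5 + asize \<phi>\<close> makes them decrease \<open>asize\<close>.
  \<open>[\<langle>G\<rangle>]\<close> counts twice because A11 unfolds it into \<open>\<langle>-G,\<psi>\<rangle>\<close>.\<close>

primrec qdepth :: "('a,'p) fm \<Rightarrow> nat" where
  "qdepth (Atom p) = 0"
| "qdepth (Neg \<phi>) = qdepth \<phi>"
| "qdepth (Conj \<phi> \<psi>) = max (qdepth \<phi>) (qdepth \<psi>)"
| "qdepth (K a \<phi>) = qdepth \<phi>"
| "qdepth (Ann \<phi> \<psi>) = qdepth \<phi> + qdepth \<psi>"
| "qdepth (GAnn G \<phi> \<psi>) = Suc (qdepth \<phi> + qdepth \<psi>)"
| "qdepth (Coal G \<phi>) = qdepth \<phi> + 2"

primrec asize :: "('a,'p) fm \<Rightarrow> nat" where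
  "asize (Atom p) = 1"
| "asize (Neg \<phi>) = Suc (asize \<phi>)"
| "asize (Conj \<phi> \<psi>) = Suc (asize \<phi> + asize \<psi>)"
| "asize (K a \<phi>) = Suc (asize \<phi>)"
| "asize (Ann \<phi> \<psi>) = (5 + asize \<phi>) * asize \<psi>"
| "asize (GAnn G \<phi> \<psi>) = 1"
| "asize (Coal G \<phi>) = 1"

lemma asize_pos: "0 < asize \<phi>"
  by (induction \<phi>) auto

lemma qdepth_LG: "\<psi> \<in> LG G \<Longrightarrow> qdepth \<psi> = 0"
proof -
  have "is_el \<psi> \<Longrightarrow> qdepth \<psi> = 0" for \<psi> :: "('a,'p) fm" by (induction \<psi>) auto
  then show "\<psi> \<in> LG G \<Longrightarrow> qdepth \<psi> = 0" using is_el_LG by blast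
qed

abbreviation truth_order :: "(('a,'p) fm \<times> ('a,'p) fm) set" where
  "truth_order \<equiv> measures [qdepth, asize]"

lemma truth_by_equivalence:
  assumes "x \<in> WC" and "fiff \<phi> \<phi>' \<in> CoRGAL" and "sat \<phi> MC x \<longleftrightarrow> sat \<phi>' MC x"
    and "\<phi>' \<in> x \<longleftrightarrow> sat \<phi>' MC x"
  shows "\<phi> \<in> x \<longleftrightarrow> sat \<phi> MC x"
  using WC_fiff[OF assms(1,2)] assms(3,4) by blast

lemma truth_GAnn:
  fixes G :: "'a::finite set"
  assumes x: "x \<in> WC"
    and IH: "\<And>\<phi>'. (\<phi>', GAnn G \<chi> \<phi>) \<in> truth_order \<Longrightarrow> \<phi>' \<in> x \<longleftrightarrow> sat \<phi>' MC x"
  shows "GAnn G \<chi> \<phi> \<in> x \<longleftrightarrow> sat (GAnn G \<chi> \<phi>) MC x"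
proof -
  have "\<chi> \<in> x \<longleftrightarrow> sat \<chi> MC x" by (rule IH) simp
  moreover have "Ann (Conj \<psi> \<chi>) \<phi> \<in> x \<longleftrightarrow> sat (Ann (Conj \<psi> \<chi>) \<phi>) MC x" if "\<psi> \<in> LG G" for \<psi>
    by (rule IH) (simp add: qdepth_LG[OF that])
  ultimately show ?thesis unfolding WC_GAnn_iff[OF x] sat_GAnn_unfold by blast
qed

lemma truth_Coal:
  fixes G :: "'a::finite set"
  assumes x: "x \<in> WC"
    and IH: "\<And>\<phi>'. (\<phi>', Coal G \<phi>) \<in> truth_order \<Longrightarrow> \<phi>' \<in> x \<longleftrightarrow> sat \<phi>' MC x"
  shows "Coal G \<phi> \<in> x \<longleftrightarrow> sat (Coal G \<phi>) MC x"
proof -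
  have "dGAnn (- G) \<psi> \<phi> \<in> x \<longleftrightarrow> sat (dGAnn (- G) \<psi> \<phi>) MC x" if "\<psi> \<in> LG G" for \<psi>
    by (rule IH) (simp add: dGAnn_def qdepth_LG[OF that])
  then show ?thesis unfolding WC_Coal_iff[OF x] sat_Coal_iff by blast
qed

lemma truth_Ann_quantifier:
  assumes x: "x \<in> WC"
    and IH_\<alpha>: "\<alpha> \<in> x \<longleftrightarrow> sat \<alpha> MC x"
    and IH_F: "\<And>\<psi>. \<psi> \<in> L \<Longrightarrow> Ann \<alpha> (F \<psi>) \<in> x \<longleftrightarrow> sat (Ann \<alpha> (F \<psi>)) MC x"
    and axiom: "\<And>\<psi>. \<psi> \<in> L \<Longrightarrow> fimp Q (F \<psi>) \<in> CoRGAL"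
    and rule: "\<forall>\<psi>\<in>L. Ann \<alpha> (F \<psi>) \<in> x \<Longrightarrow> Ann \<alpha> Q \<in> x"
    and sem: "sat (Ann \<alpha> Q) MC x \<longleftrightarrow> (\<forall>\<psi>\<in>L. sat (Ann \<alpha> (F \<psi>)) MC x)"
  shows "Ann \<alpha> Q \<in> x \<longleftrightarrow> sat (Ann \<alpha> Q) MC x"
proof -
  have "Ann \<alpha> (F \<psi>) \<in> x" if "Ann \<alpha> Q \<in> x" and "\<psi> \<in> L" for \<psi>
  proof (cases "\<alpha> \<in> x")
    case True
    show ?thesis
      by (rule WC_Ann_mp[OF x True WC_CoRGAL[OF x CoRGAL.R2[OF axiom[OF \<open>\<psi> \<in> L\<close>]]] \<open>Ann \<alpha> Q \<in> x\<close>])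
  next
    case False
    \<comment> \<open>\<open>[\<alpha>]\<close> is vacuous at \<open>x\<close>; membership comes from the induction hypothesis, not from the axioms\<close>
    with IH_\<alpha> IH_F[OF \<open>\<psi> \<in> L\<close>] show ?thesis by simp
  qed
  then have "Ann \<alpha> Q \<in> x \<longleftrightarrow> (\<forall>\<psi>\<in>L. Ann \<alpha> (F \<psi>) \<in> x)" using rule by blast
  then show ?thesis using IH_F sem by blast
qed

lemma truth_Ann:
  fixes \<alpha> \<beta> :: "('a::finite,'p::countable) fm"
  assumes x: "x \<in> WC"
    and IH: "\<And>\<phi>. (\<phi>, Ann \<alpha> \<beta>) \<in> truth_order \<Longrightarrow> \<phi> \<in> x \<longleftrightarrow> sat \<phi> MC x"
  shows "Ann \<alpha> \<beta> \<in> x \<longleftrightarrow> sat (Ann \<alpha> \<beta>) MC x"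
proof -
  have x_W: "x \<in> W MC" using x by simp
  have "asize \<alpha> < 5 + asize \<alpha>" by simp
  also have "\<dots> \<le> (5 + asize \<alpha>) * asize \<beta>" using asize_pos[of \<beta>] by simp
  finally have "(\<alpha>, Ann \<alpha> \<beta>) \<in> truth_order" by (cases "qdepth \<beta>") simp_all
  then have IH_\<alpha>: "\<alpha> \<in> x \<longleftrightarrow> sat \<alpha> MC x" by (rule IH)
  show ?thesis
  proof (cases \<beta>)
    case (Atom p)
    show ?thesis unfolding Atom
      by (rule truth_by_equivalence[OF x CoRGAL.A5 sat_Ann_Atom[OF x_W]], rule IH)
        (simp add: Atom fimp_def)
  next
    case (Neg \<gamma>)
    show ?thesis unfolding Neg
      by (rule truth_by_equivalence[OF x CoRGAL.A6 sat_Ann_Neg], rule IH)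
        (simp add: Neg fimp_def algebra_simps)
  next
    case (Conj \<gamma> \<delta>)
    show ?thesis unfolding Conj
      by (rule truth_by_equivalence[OF x CoRGAL.A7 sat_Ann_Conj], rule IH)
        (simp add: Conj max_def algebra_simps)
  next
    case (K a \<gamma>)
    show ?thesis unfolding K
      by (rule truth_by_equivalence[OF x CoRGAL.A8 sat_Ann_K[OF x_W]], rule IH)
        (simp add: K fimp_def max_def algebra_simps)
  next
    case (Ann \<gamma> \<delta>)
    show ?thesis unfolding Ann
      using asize_pos[of \<delta>]
      by (intro truth_by_equivalence[OF x CoRGAL.A9 sat_Ann_Ann] IH)
        (simp add: Ann max_def algebra_simps)
  next
    case (GAnn G \<chi> \<psi>)
    show ?thesis unfolding GAnn
    proof (rule truth_Ann_quantifier[OF x IH_\<alpha>])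
      fix g :: "('a,'p) fm" assume "g \<in> LG G"
      then show "Ann \<alpha> (Conj \<chi> (Ann (Conj g \<chi>) \<psi>)) \<in> x \<longleftrightarrow> sat (Ann \<alpha> (Conj \<chi> (Ann (Conj g \<chi>) \<psi>))) MC x"
        by (intro IH) (simp add: GAnn qdepth_LG max_def)
    next
      show "sat (Ann \<alpha> (GAnn G \<chi> \<psi>)) MC x \<longleftrightarrow> (\<forall>g\<in>LG G. sat (Ann \<alpha> (Conj \<chi> (Ann (Conj g \<chi>) \<psi>))) MC x)"
        by (rule sat_Ann_Ball) (rule sat_GAnn_iff)
    qed (use CoRGAL.A10 theory_R5[OF WC_theory[OF x], of G "NAnn \<alpha> Hole"] in auto)
  next
    case (Coal G \<psi>)
    show ?thesis unfolding Coal
    proof (rule truth_Ann_quantifier[OF x IH_\<alpha>])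
      fix g :: "('a,'p) fm" assume "g \<in> LG G"
      then show "Ann \<alpha> (dGAnn (- G) g \<psi>) \<in> x \<longleftrightarrow> sat (Ann \<alpha> (dGAnn (- G) g \<psi>)) MC x"
        by (intro IH) (simp add: Coal qdepth_LG dGAnn_def)
    next
      show "sat (Ann \<alpha> (Coal G \<psi>)) MC x \<longleftrightarrow> (\<forall>g\<in>LG G. sat (Ann \<alpha> (dGAnn (- G) g \<psi>)) MC x)"
        by (rule sat_Ann_Ball) (rule sat_Coal_iff)
    qed (use CoRGAL.A11 theory_R6[OF WC_theory[OF x], of G "NAnn \<alpha> Hole"] in auto)
  qed
qed

theorem mainTheorem14:
  fixes \<phi> :: "('a::finite, 'p::countable) fm"
    and x :: "('a, 'p) fm set"
  assumes "x \<in> WC"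
  shows "\<phi> \<in> x \<longleftrightarrow> sat \<phi> MC x"
  using wf_measures[of "[qdepth, asize]"] assms
proof (induction \<phi> arbitrary: x rule: wf_induct_rule)
  case (less \<phi>)
  note x = less.prems
  have IH: "\<psi> \<in> x \<longleftrightarrow> sat \<psi> MC x" if "(\<psi>, \<phi>) \<in> truth_order" for \<psi>
    using less.IH[OF that x] .
  show ?case
  proof (cases \<phi>)
    case (Atom p)
    then show ?thesis using x by simp
  next
    case (Neg \<psi>)
    then show ?thesis using IH[of \<psi>] by (simp add: WC_Neg[OF x])
  next
    case (Conj \<psi> \<chi>)
    have "(\<psi>, \<phi>) \<in> truth_order" and "(\<chi>, \<phi>) \<in> truth_order" by (auto simp: Conj max_def)
    then show ?thesis using IH by (simp add: Conj WC_Conj[OF x])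
  next
    case (K a \<psi>)
    then show ?thesis using truth_K[OF x] less.IH[of \<psi>] by simp
  next
    case (Ann \<alpha> \<beta>)
    show ?thesis using IH unfolding Ann by (rule truth_Ann[OF x])
  next
    case (GAnn G \<chi> \<psi>)
    show ?thesis using IH unfolding GAnn by (rule truth_GAnn[OF x])
  next
    case (Coal G \<psi>)
    show ?thesis using IH unfolding Coal by (rule truth_Coal[OF x])
  qed
qed

end
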